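(* Let $(a_k)_{k\ge1}$ be a sequence of natural numbers (all $a_k\ge1$), let $m,n\in\mathbb N$ and let $T=(i_1,\dots,i_m;\varepsilon_1,\dots,\varepsilon_m)$ with $i_r\in\{1,\dots,n\}$, $\varepsilon_r\in\{\pm1\}$. Then $$\mathrm{mult}(T)=\sum_{\substack{\varnothing\ne J\subseteq\min(\mathcal U_T)\\ \bigvee J=\hat1}}(-1)^{|J|+1}.$$
   Context: $\Pi_m$ denotes the set of partitions of $[m]=\{1,\dots,m\}$ into nonempty blocks, partially ordered by refinement ($\pi\le\sigma$ iff every block of $\pi$ is contained in a block of $\sigma$); $\hat1$ is the one-block partition $\{[m]\}$, and $\bigvee J$ denotes the join (least upper bound) of a family $J\subseteq\Pi_m$ in this lattice. $|\pi|$ is the number of blocks of $\pi$, and the Möbius function satisfies $\mu(\pi,\hat1)=(-1)^{|\pi|-1}(|\pi|-1)!$. For $B\subseteq[m]$ put $\Sigma(B;T)=\sum_{r\in B}\varepsilon_r a_{i_r}$. Let $\mathcal U_T=\{\pi\in\Pi_m:\Sigma(B;T)=0\text{ for every block }B\in\pi\}$, let $\min(\mathcal U_T)$ be the set of minimal elements of $\mathcal U_T$ with respect to $\le$, and define the multiplicity $\mathrm{mult}(T)=\sum_{\pi\in\mathcal U_T}\mu(\pi,\hat1)$. *)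

theory Defs
  imports Main "HOL-Library.Disjoint_Sets"
begin

definition Pi_m :: "nat \<Rightarrow> nat set set set" where
  "Pi_m m = {\<pi>. partition_on {1..m} \<pi>}"

definition refines :: "nat set set \<Rightarrow> nat set set \<Rightarrow> bool" where
  "refines \<pi> \<sigma> \<longleftrightarrow> (\<forall>B\<in>\<pi>. \<exists>C\<in>\<sigma>. B \<subseteq> C)"

text \<open>The top element: the one-block partition {[m]} (for m = 0 the unique partition, the empty one).\<close>
definition top_part :: "nat \<Rightarrow> nat set set" where
  "top_part m = {{1..m}} - {{}}"

definition part_join :: "nat \<Rightarrow> nat set set set \<Rightarrow> nat set set" where
  "part_join m J = (THE \<sigma>. \<sigma> \<in> Pi_m m \<and> (\<forall>\<pi>\<in>J. refines \<pi> \<sigma>) \<and>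
      (\<forall>\<tau>\<in>Pi_m m. (\<forall>\<pi>\<in>J. refines \<pi> \<tau>) \<longrightarrow> refines \<sigma> \<tau>))"

definition mobius_top :: "nat set set \<Rightarrow> int" where
  "mobius_top \<pi> = (-1) ^ (card \<pi> - 1) * fact (card \<pi> - 1)"

definition Sig :: "(nat \<Rightarrow> nat) \<Rightarrow> (nat \<Rightarrow> nat) \<Rightarrow> (nat \<Rightarrow> int) \<Rightarrow> nat set \<Rightarrow> int" where
  "Sig a i \<epsilon> B = (\<Sum>r\<in>B. \<epsilon> r * int (a (i r)))"

definition U_T :: "(nat \<Rightarrow> nat) \<Rightarrow> nat \<Rightarrow> (nat \<Rightarrow> nat) \<Rightarrow> (nat \<Rightarrow> int) \<Rightarrow> nat set set set" where
  "U_T a m i \<epsilon> = {\<pi> \<in> Pi_m m. \<forall>B\<in>\<pi>. Sig a i \<epsilon> B = 0}"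

definition min_U_T :: "(nat \<Rightarrow> nat) \<Rightarrow> nat \<Rightarrow> (nat \<Rightarrow> nat) \<Rightarrow> (nat \<Rightarrow> int) \<Rightarrow> nat set set set" where
  "min_U_T a m i \<epsilon> = {\<pi> \<in> U_T a m i \<epsilon>. \<forall>\<sigma>\<in>U_T a m i \<epsilon>. refines \<sigma> \<pi> \<longrightarrow> \<sigma> = \<pi>}"

definition mult :: "(nat \<Rightarrow> nat) \<Rightarrow> nat \<Rightarrow> (nat \<Rightarrow> nat) \<Rightarrow> (nat \<Rightarrow> int) \<Rightarrow> int" where
  "mult a m i \<epsilon> = (\<Sum>\<pi>\<in>U_T a m i \<epsilon>. mobius_top \<pi>)"

end

theory Submission
  imports Defs
begin

(* U_T is an up-set of the finite lattice \<Pi>_m, so a partition lies in U_T iff it lies above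
   some minimal element of U_T. Inclusion-exclusion over the sets J of minimal elements, together
   with "\<pi> lies above every element of J iff it lies above the join of J", turns mult(T) into
   the sum over J of (-1)^(|J|+1) times the sum of \<mu>(\<pi>, 1) over all \<pi> above the join of J.
   That inner sum is 1 for the top partition and 0 otherwise. Indeed, for the partitions \<pi>
   coarser than \<sigma>, detaching a block B of \<sigma> from the block of \<pi> containing it either deletes
   a block of \<pi> or shrinks one. With F(j) = (-1)^(j-1) (j-1)! this gives
   sum_{\<pi> \<ge> \<sigma>} F(|\<pi>|) = sum_{\<pi>'} (F(|\<pi>'|+1) + |\<pi>'| F(|\<pi>'|)), where \<pi>' ranges over
   the partitions of A - B coarser than \<sigma> - {B}, and F(c+1) + c F(c) vanishes unless c = 0. *)

lemma refines_refl: "refines \<pi> \<pi>"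
  unfolding refines_def by blast

lemma refines_trans: "refines \<pi> \<sigma> \<Longrightarrow> refines \<sigma> \<tau> \<Longrightarrow> refines \<pi> \<tau>"
  unfolding refines_def by (meson subset_trans)

lemma refines_eq_Disjoint_Sets_refines:
  "partition_on X \<pi> \<Longrightarrow> partition_on X \<sigma> \<Longrightarrow> Disjoint_Sets.refines X \<pi> \<sigma> \<longleftrightarrow> refines \<pi> \<sigma>"
  by (simp add: refines_def Disjoint_Sets.refines_def)

lemma refines_antisym:
  "partition_on X \<pi> \<Longrightarrow> partition_on X \<sigma> \<Longrightarrow> refines \<pi> \<sigma> \<Longrightarrow> refines \<sigma> \<pi> \<Longrightarrow> \<pi> = \<sigma>"
  using refines_asym refines_eq_Disjoint_Sets_refines by blast

lemma partition_on_Diff_block: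
  "partition_on X P \<Longrightarrow> D \<in> P \<Longrightarrow> partition_on (X - D) (P - {D})"
  unfolding partition_on_def disjoint_def by blast

lemma partition_on_insert_block:
  assumes "partition_on (X - D) P" "D \<subseteq> X" "D \<noteq> {}"
  shows "partition_on X (insert D P)"
  using assms partition_on_insert[of D P X] partition_onD1[OF assms(1)]
  by (auto simp: disjnt_def)

lemma finite_Pi_m: "finite (Pi_m m)"
  unfolding Pi_m_def using finitely_many_partition_on[of "{1..m}"] by simp

lemma top_part_in_Pi_m: "top_part m \<in> Pi_m m"
  by (cases "m = 0") (auto simp: top_part_def Pi_m_def partition_on_empty partition_on_space)

lemma refines_top_part: "\<pi> \<in> Pi_m m \<Longrightarrow> refines \<pi> (top_part m)"
  by (cases "m = 0") (auto simp: Pi_m_def top_part_def refines_def partition_on_empty dest: partition_onD1)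

lemma card_le_1_iff_top_part:
  assumes "\<sigma> \<in> Pi_m m"
  shows "card \<sigma> \<le> 1 \<longleftrightarrow> \<sigma> = top_part m"
proof
  have part: "partition_on {1..m} \<sigma>" using assms by (simp add: Pi_m_def)
  assume "card \<sigma> \<le> 1"
  moreover have "finite \<sigma>" using finite_elements[OF _ part] by simp
  ultimately consider "\<sigma> = {}" | C where "\<sigma> = {C}"
    by (auto simp: card_le_Suc0_iff_eq)
  then show "\<sigma> = top_part m"
    using partition_onD1[OF part] partition_onD3[OF part] by cases (auto simp: top_part_def)
next
  assume "\<sigma> = top_part m"
  then show "card \<sigma> \<le> 1"
    unfolding top_part_def by (auto simp: card_Diff1_le card_Diff_singleton_if)
qed

lemma Pi_m_has_join:
  assumes "J \<subseteq> Pi_m m"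
  obtains \<sigma> where "\<sigma> \<in> Pi_m m"
    and "\<And>\<tau>. \<tau> \<in> Pi_m m \<Longrightarrow> refines \<sigma> \<tau> \<longleftrightarrow> (\<forall>\<pi>\<in>J. refines \<pi> \<tau>)"
proof -
  define UB where "UB = {\<tau>\<in>Pi_m m. \<forall>\<pi>\<in>J. refines \<pi> \<tau>}"
  have UB_part: "partition_on {1..m} \<tau>" if "\<tau> \<in> UB" for \<tau>
    using that by (simp add: UB_def Pi_m_def)
  have "top_part m \<in> UB"
    unfolding UB_def using assms top_part_in_Pi_m refines_top_part by blast
  then have "UB \<noteq> {}" by blast
  define \<sigma> where "\<sigma> = common_refinement UB"
  have \<sigma>_part: "partition_on {1..m} \<sigma>"
    unfolding \<sigma>_def using partition_on_common_refinement[OF UB_part \<open>UB \<noteq> {}\<close>] .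
  have upper: "refines \<pi> \<sigma>" if "\<pi> \<in> J" for \<pi>
  proof -
    have \<pi>_part: "partition_on {1..m} \<pi>" using assms that by (auto simp: Pi_m_def)
    have "Disjoint_Sets.refines {1..m} \<pi> \<tau>" if "\<tau> \<in> UB" for \<tau>
      using \<open>\<pi> \<in> J\<close> that refines_eq_Disjoint_Sets_refines[OF \<pi>_part UB_part[OF that]]
      unfolding UB_def by blast
    then have "Disjoint_Sets.refines {1..m} \<pi> \<sigma>"
      unfolding \<sigma>_def using common_refinement_coarsest[OF UB_part \<pi>_part _ \<open>UB \<noteq> {}\<close>] by blast
    then show ?thesis using refines_eq_Disjoint_Sets_refines[OF \<pi>_part \<sigma>_part] by blast
  qed
  have least: "refines \<sigma> \<tau>" if "\<tau> \<in> UB" for \<tau>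
    using refines_common_refinement[OF UB_part that] refines_eq_Disjoint_Sets_refines[OF \<sigma>_part UB_part[OF that]]
    unfolding \<sigma>_def by blast
  show ?thesis
  proof
    show "\<sigma> \<in> Pi_m m" using \<sigma>_part by (simp add: Pi_m_def)
    show "refines \<sigma> \<tau> \<longleftrightarrow> (\<forall>\<pi>\<in>J. refines \<pi> \<tau>)" if "\<tau> \<in> Pi_m m" for \<tau>
      using that upper least refines_trans unfolding UB_def by blast
  qed
qed

lemma part_join:
  assumes "J \<subseteq> Pi_m m"
  shows part_join_in_Pi_m: "part_join m J \<in> Pi_m m"
    and refines_part_join_iff:
      "\<tau> \<in> Pi_m m \<Longrightarrow> refines (part_join m J) \<tau> \<longleftrightarrow> (\<forall>\<pi>\<in>J. refines \<pi> \<tau>)"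
proof -
  obtain \<sigma> where \<sigma>: "\<sigma> \<in> Pi_m m"
    and lub: "\<And>\<tau>. \<tau> \<in> Pi_m m \<Longrightarrow> refines \<sigma> \<tau> \<longleftrightarrow> (\<forall>\<pi>\<in>J. refines \<pi> \<tau>)"
    using Pi_m_has_join[OF assms] by blast
  have "part_join m J = \<sigma>"
    unfolding part_join_def
  proof (rule the_equality)
    fix \<sigma>' assume "\<sigma>' \<in> Pi_m m \<and> (\<forall>\<pi>\<in>J. refines \<pi> \<sigma>') \<and>
      (\<forall>\<tau>\<in>Pi_m m. (\<forall>\<pi>\<in>J. refines \<pi> \<tau>) \<longrightarrow> refines \<sigma>' \<tau>)"
    then show "\<sigma>' = \<sigma>"
      using \<sigma> lub[of \<sigma>'] lub[OF \<sigma>] refines_refl refines_antisym unfolding Pi_m_def by blast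
  qed (use \<sigma> lub refines_refl in blast)
  then show "part_join m J \<in> Pi_m m" "\<tau> \<in> Pi_m m \<Longrightarrow> refines (part_join m J) \<tau> \<longleftrightarrow> (\<forall>\<pi>\<in>J. refines \<pi> \<tau>)"
    using \<sigma> lub by simp_all
qed

lemma U_T_upward_closed:
  assumes "\<pi> \<in> U_T a m i \<epsilon>" "\<tau> \<in> Pi_m m" "refines \<pi> \<tau>"
  shows "\<tau> \<in> U_T a m i \<epsilon>"
proof -
  have \<pi>_part: "partition_on {1..m} \<pi>" and \<tau>_part: "partition_on {1..m} \<tau>"
    using assms(1,2) by (simp_all add: U_T_def Pi_m_def)
  have "Sig a i \<epsilon> C = 0" if C: "C \<in> \<tau>" for C
  proof -
    have "finite C" using partition_onD1[OF \<tau>_part] C by (metis Union_upper finite_atLeastAtMost finite_subset)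
    moreover have "partition_on C {B\<in>\<pi>. B \<subseteq> C}"
      using refines_obtains_subset assms(3) C refines_eq_Disjoint_Sets_refines[OF \<pi>_part \<tau>_part] by blast
    ultimately have "Sig a i \<epsilon> C = (\<Sum>B\<in>{B\<in>\<pi>. B \<subseteq> C}. Sig a i \<epsilon> B)"
      unfolding Sig_def by (rule sum.partition)
    also have "\<dots> = 0" using assms(1) by (simp add: U_T_def)
    finally show ?thesis .
  qed
  then show ?thesis using assms(2) by (simp add: U_T_def)
qed

lemma min_U_T_below:
  assumes "\<pi> \<in> U_T a m i \<epsilon>"
  obtains \<mu> where "\<mu> \<in> min_U_T a m i \<epsilon>" "refines \<mu> \<pi>"
proof -
  define Q where "Q = {\<sigma>\<in>U_T a m i \<epsilon>. refines \<sigma> \<pi>}"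
  define R where "R = (\<lambda>\<sigma> \<tau>. refines \<sigma> \<tau> \<and> \<sigma> \<noteq> \<tau>)"
  have part: "partition_on {1..m} \<sigma>" if "\<sigma> \<in> Q" for \<sigma>
    using that by (simp add: Q_def U_T_def Pi_m_def)
  have "finite Q"
    by (rule finite_subset[OF _ finite_Pi_m]) (auto simp: Q_def U_T_def)
  moreover have "asymp_on Q R" "transp_on Q R"
    using part refines_antisym refines_trans unfolding R_def asymp_on_def transp_on_def by metis+
  moreover have "Q \<noteq> {}" using assms refines_refl unfolding Q_def by blast
  ultimately obtain \<mu> where \<mu>: "\<mu> \<in> Q" and minimal: "\<And>\<sigma>. \<sigma> \<in> Q \<Longrightarrow> \<sigma> \<noteq> \<mu> \<Longrightarrow> \<not> R \<sigma> \<mu>"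
    using Finite_Set.bex_min_element[of Q R] by blast
  have "\<mu> \<in> min_U_T a m i \<epsilon>"
    using \<mu> minimal refines_trans unfolding min_U_T_def Q_def R_def by blast
  then show ?thesis using \<mu> that unfolding Q_def by blast
qed

lemma U_T_eq_upset: "U_T a m i \<epsilon> = {\<pi>\<in>Pi_m m. \<exists>\<mu>\<in>min_U_T a m i \<epsilon>. refines \<mu> \<pi>}"
proof (intro equalityI subsetI)
  fix \<pi> assume "\<pi> \<in> U_T a m i \<epsilon>"
  moreover obtain \<mu> where "\<mu> \<in> min_U_T a m i \<epsilon>" "refines \<mu> \<pi>"
    using min_U_T_below[OF \<open>\<pi> \<in> U_T a m i \<epsilon>\<close>] .
  ultimately show "\<pi> \<in> {\<pi>\<in>Pi_m m. \<exists>\<mu>\<in>min_U_T a m i \<epsilon>. refines \<mu> \<pi>}"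
    by (auto simp: U_T_def)
qed (auto simp: min_U_T_def intro: U_T_upward_closed)

lemma sum_upset_inclusion_exclusion:
  fixes g :: "'a \<Rightarrow> 'b::comm_ring_1"
  assumes "finite P" "finite M"
  shows "(\<Sum>x\<in>{x\<in>P. \<exists>\<mu>\<in>M. R \<mu> x}. g x) =
    (\<Sum>J | J \<subseteq> M \<and> J \<noteq> {}. (-1) ^ (card J + 1) * (\<Sum>x\<in>{x\<in>P. \<forall>\<mu>\<in>J. R \<mu> x}. g x))"
proof -
  define f where "f S = sum g (P \<inter> S)" for S
  have "f (S \<union> T) = f S + f T" if "disjnt S T" for S T
    unfolding f_def using that \<open>finite P\<close>
    by (simp add: Int_Un_distrib sum.union_disjoint disjnt_def inf_assoc inf_left_commute)
  then have "f (\<Union>\<mu>\<in>M. {x. R \<mu> x}) =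
      (\<Sum>J | J \<subseteq> M \<and> J \<noteq> {}. (-1) ^ (card J + 1) * f (\<Inter>\<mu>\<in>J. {x. R \<mu> x}))"
    using Incl_Excl_UN \<open>finite M\<close> by blast
  moreover have "P \<inter> (\<Union>\<mu>\<in>M. {x. R \<mu> x}) = {x\<in>P. \<exists>\<mu>\<in>M. R \<mu> x}" by blast
  moreover have "P \<inter> (\<Inter>\<mu>\<in>J. {x. R \<mu> x}) = {x\<in>P. \<forall>\<mu>\<in>J. R \<mu> x}" for J by blast
  ultimately show ?thesis unfolding f_def by simp
qed

definition coarsenings :: "nat set \<Rightarrow> nat set set \<Rightarrow> nat set set set" where
  "coarsenings A \<sigma> = {\<pi>. partition_on A \<pi> \<and> refines \<sigma> \<pi>}"

lemma finite_coarsenings: "finite A \<Longrightarrow> finite (coarsenings A \<sigma>)"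
  unfolding coarsenings_def using finitely_many_partition_on by (auto intro: finite_subset)

lemma coarsening_blocks:
  "\<pi> \<in> coarsenings A \<sigma> \<Longrightarrow> C \<in> \<pi> \<Longrightarrow> C \<subseteq> A \<and> C \<noteq> {}"
  unfolding coarsenings_def using partition_onD1 partition_onD3 by blast

lemma partition_on_other_block:
  "partition_on A \<sigma> \<Longrightarrow> B \<in> \<sigma> \<Longrightarrow> E \<in> \<sigma> - {B} \<Longrightarrow> E \<noteq> {} \<and> E \<inter> B = {}"
  using partition_onD3 disjointD[OF partition_onD2, of A \<sigma> E B] by auto

lemma insert_block_in_coarsenings:
  assumes "\<pi> \<in> coarsenings (A - B) (\<sigma> - {B})" "B \<subseteq> A" "B \<noteq> {}"
  shows "insert B \<pi> \<in> coarsenings A \<sigma>"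
  using assms partition_on_insert_block[of A B \<pi>] unfolding coarsenings_def refines_def by blast

lemma merge_block_in_coarsenings:
  assumes "\<pi> \<in> coarsenings (A - B) (\<sigma> - {B})" "D \<in> \<pi>" "B \<subseteq> A"
  shows "insert (D \<union> B) (\<pi> - {D}) \<in> coarsenings A \<sigma>"
proof -
  have "partition_on (A - B - D) (\<pi> - {D})"
    using assms(1,2) partition_on_Diff_block unfolding coarsenings_def by blast
  moreover have "A - B - D = A - (D \<union> B)" by blast
  moreover have "D \<union> B \<subseteq> A" "D \<union> B \<noteq> {}"
    using coarsening_blocks[OF assms(1,2)] assms(3) by auto
  ultimately have "partition_on A (insert (D \<union> B) (\<pi> - {D}))"
    by (simp add: partition_on_insert_block)
  moreover have "refines \<sigma> (insert (D \<union> B) (\<pi> - {D}))"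
    unfolding refines_def
  proof
    fix E assume "E \<in> \<sigma>"
    show "\<exists>C\<in>insert (D \<union> B) (\<pi> - {D}). E \<subseteq> C"
    proof (cases "E = B")
      case False
      then obtain G where "G \<in> \<pi>" "E \<subseteq> G"
        using \<open>E \<in> \<sigma>\<close> assms(1) unfolding coarsenings_def refines_def by blast
      then show ?thesis by (cases "G = D") auto
    qed auto
  qed
  ultimately show ?thesis unfolding coarsenings_def by blast
qed

lemma remove_block_in_coarsenings:
  assumes "partition_on A \<sigma>" "B \<in> \<sigma>" "\<pi> \<in> coarsenings A \<sigma>" "B \<in> \<pi>"
  shows "\<pi> - {B} \<in> coarsenings (A - B) (\<sigma> - {B})"
proof -
  have "partition_on (A - B) (\<pi> - {B})"
    using assms(3,4) partition_on_Diff_block unfolding coarsenings_def by blast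
  moreover have "refines (\<sigma> - {B}) (\<pi> - {B})"
    unfolding refines_def
  proof
    fix E assume E: "E \<in> \<sigma> - {B}"
    then obtain G where "G \<in> \<pi>" "E \<subseteq> G"
      using assms(3) unfolding coarsenings_def refines_def by blast
    moreover have "E \<noteq> {}" "E \<inter> B = {}" using partition_on_other_block[OF assms(1,2) E] by simp_all
    ultimately show "\<exists>G\<in>\<pi> - {B}. E \<subseteq> G" by blast
  qed
  ultimately show ?thesis by (simp add: coarsenings_def)
qed

lemma shrink_block_in_coarsenings:
  assumes "partition_on A \<sigma>" "B \<in> \<sigma>" "\<pi> \<in> coarsenings A \<sigma>" "C \<in> \<pi>" "B \<subset> C"
  shows "insert (C - B) (\<pi> - {C}) \<in> coarsenings (A - B) (\<sigma> - {B})"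
proof -
  have \<pi>_part: "partition_on A \<pi>" using assms(3) by (simp add: coarsenings_def)
  have "partition_on (A - C) (\<pi> - {C})" using partition_on_Diff_block[OF \<pi>_part assms(4)] .
  moreover have "A - B - (C - B) = A - C" "C - B \<subseteq> A - B" "C - B \<noteq> {}"
    using assms(4,5) partition_onD1[OF \<pi>_part] by auto
  ultimately have "partition_on (A - B) (insert (C - B) (\<pi> - {C}))"
    by (metis partition_on_insert_block)
  moreover have "refines (\<sigma> - {B}) (insert (C - B) (\<pi> - {C}))"
    unfolding refines_def
  proof
    fix E assume E: "E \<in> \<sigma> - {B}"
    then obtain G where "G \<in> \<pi>" "E \<subseteq> G"
      using assms(3) unfolding coarsenings_def refines_def by blast
    then show "\<exists>G\<in>insert (C - B) (\<pi> - {C}). E \<subseteq> G"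
      using partition_on_other_block[OF assms(1,2) E] by (cases "G = C") auto
  qed
  ultimately show ?thesis by (simp add: coarsenings_def)
qed

lemma coarsenings_cases:
  assumes \<sigma>: "partition_on A \<sigma>" "B \<in> \<sigma>" and \<pi>: "\<pi> \<in> coarsenings A \<sigma>"
  obtains "B \<in> \<pi>" "\<pi> - {B} \<in> coarsenings (A - B) (\<sigma> - {B})"
  | \<pi>' D where "\<pi>' \<in> coarsenings (A - B) (\<sigma> - {B})" "D \<in> \<pi>'" "\<pi> = insert (D \<union> B) (\<pi>' - {D})"
proof -
  obtain C where C: "C \<in> \<pi>" "B \<subseteq> C"
    using \<pi> \<sigma>(2) unfolding coarsenings_def refines_def by blast
  show thesis
  proof (cases "C = B")
    case True
    then show thesis using that(1) remove_block_in_coarsenings[OF \<sigma> \<pi>] C(1) by blast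
  next
    case False
    define D where "D = C - B"
    have "D \<noteq> {}" "D \<subseteq> C" "D \<union> B = C" using C(2) False unfolding D_def by auto
    moreover have "E \<inter> C = {}" if "E \<in> \<pi> - {C}" for E
      using that \<pi> C(1) disjointD[OF partition_onD2] unfolding coarsenings_def by blast
    ultimately have "insert D (\<pi> - {C}) - {D} = \<pi> - {C}" by blast
    with \<open>D \<union> B = C\<close> have "\<pi> = insert (D \<union> B) (insert D (\<pi> - {C}) - {D})"
      using C(1) by (simp add: insert_absorb)
    moreover have "insert D (\<pi> - {C}) \<in> coarsenings (A - B) (\<sigma> - {B})"
      unfolding D_def using shrink_block_in_coarsenings[OF \<sigma> \<pi> C(1)] C(2) False by blast
    ultimately show thesis using that(2) by blast
  qed
qed

lemma coarsenings_split:
  assumes "partition_on A \<sigma>" "B \<in> \<sigma>"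
  shows "coarsenings A \<sigma> = insert B ` coarsenings (A - B) (\<sigma> - {B}) \<union>
    (\<lambda>(\<pi>, D). insert (D \<union> B) (\<pi> - {D})) ` (SIGMA \<pi>:coarsenings (A - B) (\<sigma> - {B}). \<pi>)"
    (is "_ = insert B ` ?S \<union> ?merge ` (SIGMA \<pi>:?S. \<pi>)")
proof (intro equalityI subsetI)
  fix \<pi> assume "\<pi> \<in> coarsenings A \<sigma>"
  then show "\<pi> \<in> insert B ` ?S \<union> ?merge ` (SIGMA \<pi>:?S. \<pi>)"
  proof (rule coarsenings_cases[OF assms(1,2)])
    assume "B \<in> \<pi>" "\<pi> - {B} \<in> ?S"
    moreover from \<open>B \<in> \<pi>\<close> have "\<pi> = insert B (\<pi> - {B})" by (simp add: insert_absorb)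
    ultimately show ?thesis by blast
  next
    fix \<pi>' D assume "\<pi>' \<in> ?S" "D \<in> \<pi>'" "\<pi> = insert (D \<union> B) (\<pi>' - {D})"
    then show ?thesis by force
  qed
next
  have B: "B \<subseteq> A" "B \<noteq> {}" using assms(1,2) partition_onD1 partition_onD3 by blast+
  fix \<pi> assume "\<pi> \<in> insert B ` ?S \<union> ?merge ` (SIGMA \<pi>:?S. \<pi>)"
  then show "\<pi> \<in> coarsenings A \<sigma>"
    using insert_block_in_coarsenings[OF _ B] merge_block_in_coarsenings[OF _ _ B(1)] by auto
qed

lemma inj_on_merge_block:
  assumes disjoint_B: "\<And>\<pi> C. \<pi> \<in> S \<Longrightarrow> C \<in> \<pi> \<Longrightarrow> C \<inter> B = {}" and "B \<noteq> {}"
  shows "inj_on (\<lambda>(\<pi>, D). insert (D \<union> B) (\<pi> - {D})) (SIGMA \<pi>:S. \<pi>)"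
proof (intro inj_onI)
  fix x y assume x: "x \<in> (SIGMA \<pi>:S. \<pi>)" and y: "y \<in> (SIGMA \<pi>:S. \<pi>)"
    and eq_xy: "(\<lambda>(\<pi>, D). insert (D \<union> B) (\<pi> - {D})) x = (\<lambda>(\<pi>, D). insert (D \<union> B) (\<pi> - {D})) y"
  obtain \<pi>1 D1 \<pi>2 D2 where xy: "x = (\<pi>1, D1)" "y = (\<pi>2, D2)" by (metis surj_pair)
  with x y have D: "\<pi>1 \<in> S" "D1 \<in> \<pi>1" "\<pi>2 \<in> S" "D2 \<in> \<pi>2" by simp_all
  from eq_xy xy have eq: "insert (D1 \<union> B) (\<pi>1 - {D1}) = insert (D2 \<union> B) (\<pi>2 - {D2})" by simp
  have new: "D \<union> B \<notin> \<pi>1 \<union> \<pi>2" for D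
    using disjoint_B[OF D(1), of "D \<union> B"] disjoint_B[OF D(3), of "D \<union> B"] \<open>B \<noteq> {}\<close> by auto
  have "D1 \<union> B \<in> insert (D2 \<union> B) (\<pi>2 - {D2})"
    unfolding eq[symmetric] by simp
  then have "D1 \<union> B = D2 \<union> B" using new[of D1] by (metis DiffD1 UnI2 insertE)
  moreover have "D1 \<inter> B = {}" "D2 \<inter> B = {}" using disjoint_B D by simp_all
  ultimately have "D1 = D2" by blast
  have "\<pi>1 - {D1} = insert (D1 \<union> B) (\<pi>1 - {D1}) - {D1 \<union> B}"
    using new[of D1] by auto
  also have "\<dots> = insert (D2 \<union> B) (\<pi>2 - {D2}) - {D2 \<union> B}"
    by (subst eq) (simp add: \<open>D1 = D2\<close>)
  also have "\<dots> = \<pi>2 - {D2}"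
    using new[of D2] by auto
  finally have "\<pi>1 = \<pi>2" using D \<open>D1 = D2\<close> by (metis insert_Diff)
  with \<open>D1 = D2\<close> show "x = y" using xy by simp
qed

lemma insert_block_disjoint_merge_block:
  assumes "\<And>\<pi> C. \<pi> \<in> S \<Longrightarrow> C \<in> \<pi> \<Longrightarrow> C \<inter> B = {} \<and> C \<noteq> {}" "B \<noteq> {}"
  shows "insert B ` S \<inter> (\<lambda>(\<pi>, D). insert (D \<union> B) (\<pi> - {D})) ` (SIGMA \<pi>:S. \<pi>) = {}"
proof (rule disjoint_iff[THEN iffD2], intro allI impI notI)
  fix \<rho> assume "\<rho> \<in> insert B ` S" "\<rho> \<in> (\<lambda>(\<pi>, D). insert (D \<union> B) (\<pi> - {D})) ` (SIGMA \<pi>:S. \<pi>)"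
  then obtain \<pi>1 \<pi>2 D where \<pi>2: "\<pi>2 \<in> S" "D \<in> \<pi>2"
    and eq: "insert B \<pi>1 = insert (D \<union> B) (\<pi>2 - {D})"
    by auto
  from eq have "B = D \<union> B \<or> B \<in> \<pi>2" by (metis DiffD1 insertCI insertE)
  then show False using assms \<pi>2 by blast
qed

lemma sum_coarsenings_split:
  fixes h :: "nat set set \<Rightarrow> 'b::comm_monoid_add"
  assumes "finite A" "partition_on A \<sigma>" "B \<in> \<sigma>"
  shows "(\<Sum>\<pi>\<in>coarsenings A \<sigma>. h \<pi>) = (\<Sum>\<pi>\<in>coarsenings (A - B) (\<sigma> - {B}).
      h (insert B \<pi>) + (\<Sum>D\<in>\<pi>. h (insert (D \<union> B) (\<pi> - {D}))))"
proof -
  let ?S = "coarsenings (A - B) (\<sigma> - {B})"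
  let ?merge = "\<lambda>(\<pi>, D). insert (D \<union> B) (\<pi> - {D})"
  have "B \<noteq> {}" using assms(2,3) partition_onD3 by blast
  have finite_S: "finite ?S" using finite_coarsenings assms(1) by blast
  have finite_blocks: "finite \<pi>" if "\<pi> \<in> ?S" for \<pi>
    using that assms(1) finite_elements unfolding coarsenings_def by blast
  have blocks: "C \<inter> B = {} \<and> C \<noteq> {}" if "\<pi> \<in> ?S" "C \<in> \<pi>" for \<pi> C
    using coarsening_blocks[OF that] by blast
  have "inj_on (insert B) ?S"
    using blocks \<open>B \<noteq> {}\<close> by (intro inj_onI) (metis Diff_insert_absorb Int_absorb)
  moreover have "inj_on ?merge (SIGMA \<pi>:?S. \<pi>)"
    using blocks \<open>B \<noteq> {}\<close> by (intro inj_on_merge_block) blast+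
  moreover have "insert B ` ?S \<inter> ?merge ` (SIGMA \<pi>:?S. \<pi>) = {}"
    using blocks \<open>B \<noteq> {}\<close> by (rule insert_block_disjoint_merge_block)
  moreover have "finite (SIGMA \<pi>:?S. \<pi>)" using finite_S finite_blocks by auto
  ultimately have "(\<Sum>\<pi>\<in>coarsenings A \<sigma>. h \<pi>) =
      (\<Sum>\<pi>\<in>?S. h (insert B \<pi>)) + (\<Sum>x\<in>(SIGMA \<pi>:?S. \<pi>). h (?merge x))"
    using coarsenings_split[OF assms(2,3)] finite_S by (simp add: sum.union_disjoint sum.reindex)
  also have "(\<Sum>x\<in>(SIGMA \<pi>:?S. \<pi>). h (?merge x)) = (\<Sum>\<pi>\<in>?S. \<Sum>D\<in>\<pi>. h (?merge (\<pi>, D)))"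
    using finite_S finite_blocks by (subst sum.Sigma) (auto simp: split_def)
  finally show ?thesis by (simp add: sum.distrib)
qed

lemma sum_card_coarsenings_split:
  fixes F :: "nat \<Rightarrow> 'b::semiring_1"
  assumes "finite A" "partition_on A \<sigma>" "B \<in> \<sigma>"
  shows "(\<Sum>\<pi>\<in>coarsenings A \<sigma>. F (card \<pi>)) =
    (\<Sum>\<pi>\<in>coarsenings (A - B) (\<sigma> - {B}). F (card \<pi> + 1) + of_nat (card \<pi>) * F (card \<pi>))"
  unfolding sum_coarsenings_split[OF assms]
proof (intro sum.cong refl)
  fix \<pi> assume \<pi>: "\<pi> \<in> coarsenings (A - B) (\<sigma> - {B})"
  have "finite \<pi>" using \<pi> assms(1) finite_elements unfolding coarsenings_def by blast
  have "B \<noteq> {}" using assms(2,3) partition_onD3 by blast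
  then have new_block: "D \<union> B \<notin> \<pi>" for D using coarsening_blocks[OF \<pi>] by blast
  have "card (insert (D \<union> B) (\<pi> - {D})) = card \<pi>" if "D \<in> \<pi>" for D
    using \<open>finite \<pi>\<close> new_block[of D] card.remove[OF \<open>finite \<pi>\<close> that] by (simp del: Un_iff)
  moreover have "card (insert B \<pi>) = card \<pi> + 1"
    using \<open>finite \<pi>\<close> new_block[of "{}"] by simp
  ultimately show "F (card (insert B \<pi>)) + (\<Sum>D\<in>\<pi>. F (card (insert (D \<union> B) (\<pi> - {D})))) =
      F (card \<pi> + 1) + of_nat (card \<pi>) * F (card \<pi>)"
    by simp
qed

lemma sign_fact_cancel:
  "(-1::int) ^ c * fact c + int c * ((-1) ^ (c - 1) * fact (c - 1)) = (if c = 0 then 1 else 0)"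
proof (cases c)
  case (Suc k)
  then show ?thesis by (simp add: algebra_simps)
qed simp

lemma empty_in_coarsenings_Diff_iff:
  assumes "finite A" "partition_on A \<sigma>" "B \<in> \<sigma>"
  shows "{} \<in> coarsenings (A - B) (\<sigma> - {B}) \<longleftrightarrow> card \<sigma> \<le> 1"
proof -
  have "{} \<in> coarsenings (A - B) (\<sigma> - {B}) \<longleftrightarrow> A - B = {} \<and> \<sigma> - {B} = {}"
    by (auto simp: coarsenings_def partition_on_def refines_def)
  also have "\<dots> \<longleftrightarrow> \<sigma> - {B} = {}"
    using partition_onD1[OF assms(2)] by blast
  also have "\<dots> \<longleftrightarrow> card \<sigma> \<le> 1"
    using assms(3) finite_elements[OF assms(1,2)] by (auto simp: card_le_Suc0_iff_eq)
  finally show ?thesis .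
qed

lemma sum_mobius_top_coarsenings:
  assumes "finite A" "partition_on A \<sigma>"
  shows "(\<Sum>\<pi>\<in>coarsenings A \<sigma>. mobius_top \<pi>) = (if card \<sigma> \<le> 1 then 1 else 0)"
proof (cases "\<sigma> = {}")
  case True
  then have "A = {}" using partition_onD1[OF assms(2)] by simp
  then have "coarsenings A \<sigma> = {{}}"
    using True by (auto simp: coarsenings_def partition_on_empty refines_def)
  then show ?thesis using True by (simp add: mobius_top_def)
next
  case False
  then obtain B where B: "B \<in> \<sigma>" by blast
  let ?S = "coarsenings (A - B) (\<sigma> - {B})"
  have "(\<Sum>\<pi>\<in>coarsenings A \<sigma>. mobius_top \<pi>) = (\<Sum>\<pi>\<in>?S. if \<pi> = {} then 1 else 0)"
  proof -
    have "(\<Sum>\<pi>\<in>coarsenings A \<sigma>. mobius_top \<pi>) =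
        (\<Sum>\<pi>\<in>?S. (-1) ^ card \<pi> * fact (card \<pi>) + int (card \<pi>) * ((-1) ^ (card \<pi> - 1) * fact (card \<pi> - 1)))"
      unfolding mobius_top_def
      using sum_card_coarsenings_split[OF assms B, of "\<lambda>j. (-1) ^ (j - 1) * fact (j - 1)"] by simp
    also have "\<dots> = (\<Sum>\<pi>\<in>?S. if \<pi> = {} then 1 else 0)"
    proof (intro sum.cong refl)
      fix \<pi> assume "\<pi> \<in> ?S"
      then have "finite \<pi>" using assms(1) finite_elements unfolding coarsenings_def by blast
      then show "(-1) ^ card \<pi> * fact (card \<pi>) + int (card \<pi>) * ((-1) ^ (card \<pi> - 1) * fact (card \<pi> - 1))
          = (if \<pi> = {} then 1 else 0)"
        unfolding sign_fact_cancel by simp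
    qed
    finally show ?thesis .
  qed
  also have "\<dots> = (if {} \<in> ?S then 1 else 0)"
    using finite_coarsenings[OF finite_Diff[OF assms(1)]] by simp
  also have "({} \<in> ?S) \<longleftrightarrow> card \<sigma> \<le> 1"
    using empty_in_coarsenings_Diff_iff[OF assms B] .
  finally show ?thesis .
qed

lemma sum_mobius_top_upper_bounds:
  assumes "J \<subseteq> Pi_m m"
  shows "(\<Sum>\<pi>\<in>{\<pi>\<in>Pi_m m. \<forall>\<mu>\<in>J. refines \<mu> \<pi>}. mobius_top \<pi>) =
    (if part_join m J = top_part m then 1 else 0)"
proof -
  have join: "part_join m J \<in> Pi_m m" using part_join_in_Pi_m[OF assms] .
  have "{\<pi>\<in>Pi_m m. \<forall>\<mu>\<in>J. refines \<mu> \<pi>} = coarsenings {1..m} (part_join m J)"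
    using refines_part_join_iff[OF assms] by (auto simp: coarsenings_def Pi_m_def)
  then show ?thesis
    using sum_mobius_top_coarsenings[of "{1..m}" "part_join m J"] card_le_1_iff_top_part[OF join] join
    by (simp add: Pi_m_def)
qed

theorem lemma5p2:
  fixes a :: "nat \<Rightarrow> nat" and m n :: nat and i :: "nat \<Rightarrow> nat" and \<epsilon> :: "nat \<Rightarrow> int"
  assumes "\<forall>k\<ge>1. a k \<ge> 1"
    and "\<forall>r\<in>{1..m}. i r \<in> {1..n}"
    and "\<forall>r\<in>{1..m}. \<epsilon> r = 1 \<or> \<epsilon> r = -1"
  shows "mult a m i \<epsilon> =
    (\<Sum>J\<in>{J. J \<noteq> {} \<and> J \<subseteq> min_U_T a m i \<epsilon> \<and> part_join m J = top_part m}.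
       (-1) ^ (card J + 1))"
proof -
  let ?M = "min_U_T a m i \<epsilon>"
  have M_Pi_m: "?M \<subseteq> Pi_m m" by (auto simp: min_U_T_def U_T_def)
  then have "finite ?M" using finite_Pi_m finite_subset by blast
  have "mult a m i \<epsilon> = (\<Sum>\<pi>\<in>{\<pi>\<in>Pi_m m. \<exists>\<mu>\<in>?M. refines \<mu> \<pi>}. mobius_top \<pi>)"
    by (simp add: mult_def U_T_eq_upset)
  also have "\<dots> = (\<Sum>J | J \<subseteq> ?M \<and> J \<noteq> {}.
      (-1) ^ (card J + 1) * (\<Sum>\<pi>\<in>{\<pi>\<in>Pi_m m. \<forall>\<mu>\<in>J. refines \<mu> \<pi>}. mobius_top \<pi>))"
    using finite_Pi_m \<open>finite ?M\<close> by (rule sum_upset_inclusion_exclusion)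
  also have "\<dots> = (\<Sum>J | J \<subseteq> ?M \<and> J \<noteq> {}.
      if part_join m J = top_part m then (-1) ^ (card J + 1) else 0)"
    by (intro sum.cong refl) (simp add: sum_mobius_top_upper_bounds[OF order.trans[OF _ M_Pi_m]])
  also have "\<dots> = (\<Sum>J\<in>{J. J \<noteq> {} \<and> J \<subseteq> ?M \<and> part_join m J = top_part m}. (-1) ^ (card J + 1))"
    using \<open>finite ?M\<close> by (subst sum.inter_filter[symmetric]) (simp_all add: conj_commute conj_left_commute)
  finally show ?thesis .
qed

end
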